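(* Consider the partial differential equation $$u_t = f(u) + \frac{1}{x}\bigl(x\, g(u)\, u_x\bigr)_x$$ for $u=u(x,t)$, where $f$ is a smooth function that is not identically zero, and $g(u)=k_1 e^{k_2 u}$ with real constants $k_1\neq 0$, $k_2\neq 0$. Then the equation admits a Lie point symmetry other than (constant multiples of) $X=\frac{\partial}{\partial t}$ if and only if $f$ is of one of the following three types, in which case the equation admits the listed symmetries: (a) If $f(u)=k_3 e^{k_4 u}$ with $k_3\neq 0$, $k_4\neq 0$, then the equation has the symmetries $$X_1=\frac{\partial}{\partial t},\qquad X_2=(k_4-k_2)x\frac{\partial}{\partial x}+2k_4 t\frac{\partial}{\partial t}-2\frac{\partial}{\partial u}.$$ (b) If $f(u)=k_3 e^{k_2 u}+k_5$ with $k_3\neq 0$, $k_5\neq 0$, then the equation has the symmetries $$X_1=\frac{\partial}{\partial t},\qquad X_2=e^{-k_2k_5 t}\frac{\partial}{\partial t}+k_5 e^{-k_2k_5 t}\frac{\partial}{\partial u}.$$ (c) If $f(u)=k_5$ with $k_5\neq 0$, then the equation has the symmetries $$X_1=\frac{\partial}{\partial t},\qquad X_2=e^{-k_2k_5 t}\frac{\partial}{\partial t}+k_5 e^{-k_2k_5 t}\frac{\partial}{\partial u},\qquad X_3=k_2 x\frac{\partial}{\partial x}+2\frac{\partial}{\partial u}.$$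
   Context: A Lie point symmetry of the equation is a vector field $X=\xi(t,x,u)\frac{\partial}{\partial x}+\tau(t,x,u)\frac{\partial}{\partial t}+\eta(t,x,u)\frac{\partial}{\partial u}$ whose second prolongation annihilates $u_t-f(u)-\frac{1}{x}(x g(u)u_x)_x$ on the solution set of the equation (the standard infinitesimal invariance criterion). The equation is a generalized Fisher equation written in cylindrical coordinates, with $x$ the radial variable. For arbitrary $f,g$ the field $\frac{\partial}{\partial t}$ is always a symmetry. *)

theory Defs
  imports "HOL-Analysis.Analysis"
begin

text \<open>Coefficient functions of a vector field
  X = xi(x,t,u) d/dx + tau(x,t,u) d/dt + eta(x,t,u) d/du
  are functions of three real arguments, in the order x, t, u.
  The domain is the half space x > 0 (x is the radial variable).\<close>

type_synonym fun3 = "real \<Rightarrow> real \<Rightarrow> real \<Rightarrow> real"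

definition pDx :: "fun3 \<Rightarrow> fun3" where
  "pDx F = (\<lambda>x t u. deriv (\<lambda>s. F s t u) x)"
definition pDt :: "fun3 \<Rightarrow> fun3" where
  "pDt F = (\<lambda>x t u. deriv (\<lambda>s. F x s u) t)"
definition pDu :: "fun3 \<Rightarrow> fun3" where
  "pDu F = (\<lambda>x t u. deriv (\<lambda>s. F x t s) u)"

datatype dir = DX | DT | DU

fun pD :: "dir \<Rightarrow> fun3 \<Rightarrow> fun3" where
  "pD DX F = pDx F" | "pD DT F = pDt F" | "pD DU F = pDu F"

fun iter_pD :: "dir list \<Rightarrow> fun3 \<Rightarrow> fun3" where
  "iter_pD [] F = F"
| "iter_pD (d # ds) F = pD d (iter_pD ds F)"

definition smooth3 :: "fun3 \<Rightarrow> bool" where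
  "smooth3 F \<longleftrightarrow> (\<forall>ds. let G = iter_pD ds F in
      continuous_on {p :: real \<times> real \<times> real. fst p > 0} (\<lambda>(x, t, u). G x t u) \<and>
      (\<forall>x t u. x > 0 \<longrightarrow>
          (\<lambda>s. G s t u) differentiable (at x) \<and>
          (\<lambda>s. G x s u) differentiable (at t) \<and>
          (\<lambda>s. G x t s) differentiable (at u)))"

definition smooth1 :: "(real \<Rightarrow> real) \<Rightarrow> bool" where
  "smooth1 f \<longleftrightarrow> (\<forall>n x. ((deriv ^^ n) f) differentiable (at x))"

text \<open>Second prolongation coefficients (Olver, Applications of Lie Groups to DEs,
  formulas for two independent variables x, t and one dependent variable u),
  evaluated at a jet point (x,t,u,u_x,u_t,u_xx,u_xt).\<close>
definition eta_x :: "fun3 \<Rightarrow> fun3 \<Rightarrow> fun3 \<Rightarrow>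
    real \<Rightarrow> real \<Rightarrow> real \<Rightarrow> real \<Rightarrow> real \<Rightarrow> real" where
  "eta_x xi tau eta x t u ux ut =
     pDx eta x t u + (pDu eta x t u - pDx xi x t u) * ux - pDx tau x t u * ut
     - pDu xi x t u * ux^2 - pDu tau x t u * ux * ut"

definition eta_t :: "fun3 \<Rightarrow> fun3 \<Rightarrow> fun3 \<Rightarrow>
    real \<Rightarrow> real \<Rightarrow> real \<Rightarrow> real \<Rightarrow> real \<Rightarrow> real" where
  "eta_t xi tau eta x t u ux ut =
     pDt eta x t u - pDt xi x t u * ux + (pDu eta x t u - pDt tau x t u) * ut
     - pDu xi x t u * ux * ut - pDu tau x t u * ut^2"

definition eta_xx :: "fun3 \<Rightarrow> fun3 \<Rightarrow> fun3 \<Rightarrow>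
    real \<Rightarrow> real \<Rightarrow> real \<Rightarrow> real \<Rightarrow> real \<Rightarrow> real \<Rightarrow> real \<Rightarrow> real" where
  "eta_xx xi tau eta x t u ux ut uxx uxt =
     pDx (pDx eta) x t u
     + (2 * pDu (pDx eta) x t u - pDx (pDx xi) x t u) * ux
     - pDx (pDx tau) x t u * ut
     + (pDu (pDu eta) x t u - 2 * pDu (pDx xi) x t u) * ux^2
     - 2 * pDu (pDx tau) x t u * ux * ut
     - pDu (pDu xi) x t u * ux^3
     - pDu (pDu tau) x t u * ux^2 * ut
     + (pDu eta x t u - 2 * pDx xi x t u) * uxx
     - 2 * pDx tau x t u * uxt
     - 3 * pDu xi x t u * ux * uxx
     - pDu tau x t u * ut * uxx
     - 2 * pDu tau x t u * ux * uxt"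

text \<open>A second order evolution-type equation E(x,t,u,u_x,u_t,u_xx) = 0 (not depending
  on u_xt, u_tt). Second prolongation of X applied to E, at a jet point.\<close>
type_synonym eqn = "real \<Rightarrow> real \<Rightarrow> real \<Rightarrow> real \<Rightarrow> real \<Rightarrow> real \<Rightarrow> real"

definition pr2 :: "eqn \<Rightarrow> fun3 \<Rightarrow> fun3 \<Rightarrow> fun3 \<Rightarrow>
    real \<Rightarrow> real \<Rightarrow> real \<Rightarrow> real \<Rightarrow> real \<Rightarrow> real \<Rightarrow> real \<Rightarrow> real" where
  "pr2 E xi tau eta x t u ux ut uxx uxt =
       xi x t u * deriv (\<lambda>s. E s t u ux ut uxx) x
     + tau x t u * deriv (\<lambda>s. E x s u ux ut uxx) t
     + eta x t u * deriv (\<lambda>s. E x t s ux ut uxx) u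
     + eta_x xi tau eta x t u ux ut * deriv (\<lambda>s. E x t u s ut uxx) ux
     + eta_t xi tau eta x t u ux ut * deriv (\<lambda>s. E x t u ux s uxx) ut
     + eta_xx xi tau eta x t u ux ut uxx uxt * deriv (\<lambda>s. E x t u ux ut s) uxx"

definition lie_point_symmetry :: "eqn \<Rightarrow> fun3 \<Rightarrow> fun3 \<Rightarrow> fun3 \<Rightarrow> bool" where
  "lie_point_symmetry E xi tau eta \<longleftrightarrow>
     smooth3 xi \<and> smooth3 tau \<and> smooth3 eta \<and>
     (\<forall>x t u ux ut uxx uxt. x > 0 \<longrightarrow> E x t u ux ut uxx = 0 \<longrightarrow>
        pr2 E xi tau eta x t u ux ut uxx uxt = 0)"

text \<open>The generalized Fisher equation in cylindrical coordinates,
  u_t - f(u) - (1/x) (x g(u) u_x)_x = 0, written on the jet space: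
  (1/x)(x g(u) u_x)_x = g(u) u_xx + g'(u) u_x^2 + g(u) u_x / x.\<close>
definition fisher_cyl :: "(real \<Rightarrow> real) \<Rightarrow> (real \<Rightarrow> real) \<Rightarrow> eqn" where
  "fisher_cyl f g = (\<lambda>x t u ux ut uxx.
      ut - f u - (g u * uxx + deriv g u * ux^2 + g u * ux / x))"

end

theory Submission
  imports Defs
begin

text \<open>Eliminating \<open>u\<^sub>t\<close> by means of the equation turns the invariance criterion into an
  identity in the free jet coordinates \<open>u\<^sub>x, u\<^sub>x\<^sub>x, u\<^sub>x\<^sub>t\<close>. Its coefficients of
  \<open>u\<^sub>x\<^sub>t\<close> and \<open>u\<^sub>x\<^sub>x\<close> force \<open>\<tau> = T(t)\<close>, \<open>\<xi>\<close> independent of \<open>u\<close> and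
  \<open>k\<^sub>2 \<eta> = 2 \<xi>\<^sub>x - T'\<close>. Since \<open>g = k\<^sub>1 e\<^bsup>k\<^sub>2 u\<^esup>\<close> really depends on \<open>u\<close>, the
  coefficient of \<open>u\<^sub>x\<close> splits once more: \<open>\<xi> = X(x)\<close> with \<open>X/x\<^sup>2 - X'/x - 3X'' = 0\<close>.
  What remains is \<open>(2X' - T') f' + 2 g (X''/x + X''') + T'' + k\<^sub>2 T' f = 0\<close>.

  If \<open>f'\<close> is a multiple of \<open>e\<^bsup>k\<^sub>2 u\<^esup>\<close>, then \<open>f\<close> is already of type (a) with
  \<open>k\<^sub>4 = k\<^sub>2\<close>, (b) or (c). Otherwise \<open>f'\<close> and \<open>g\<close> are linearly independent, so \<open>X'\<close> is a
  constant \<open>a\<close>, \<open>X = a x\<close>, and \<open>(2a - T') f' + T'' + k\<^sub>2 T' f = 0\<close> for all \<open>t, u\<close>. Unless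
  the symmetry is a multiple of \<open>\<partial>\<^sub>t\<close>, this is a nontrivial linear relation between
  \<open>f'\<close>, \<open>f\<close> and \<open>1\<close>, which forces \<open>f = k\<^sub>3 e\<^bsup>k\<^sub>4 u\<^esup>\<close>. Conversely, the listed fields
  are checked directly.\<close>

section \<open>Calculus on the real line\<close>

lemma deriv_eq_on_half_line:
  fixes F G :: "real \<Rightarrow> real"
  assumes "x > 0" and "\<And>s. s > 0 \<Longrightarrow> F s = G s"
  shows "deriv F x = deriv G x"
proof (rule deriv_cong_ev[OF _ refl])
  show "\<forall>\<^sub>F s in nhds x. F s = G s"
    using eventually_nhds_in_open[of "{0<..}" x] assms by (auto elim: eventually_mono)
qed

lemma constant_on_half_line:
  fixes F :: "real \<Rightarrow> real"
  assumes "\<And>s. s > 0 \<Longrightarrow> (F has_real_derivative 0) (at s)" and "a > 0" and "b > 0"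
  shows "F a = F b"
proof -
  obtain c where "\<forall>s\<in>{0<..}. F s = c"
    using has_field_derivative_zero_constant[of "{0<..}" F] assms(1)
    by (auto intro: has_field_derivative_at_within)
  then show ?thesis using assms(2,3) by auto
qed

lemma deriv_scaled_exp: "deriv (\<lambda>s. c * exp (d * s)) s = c * d * exp (d * (s::real))"
  by (rule DERIV_imp_deriv) (auto intro!: derivative_eq_intros)

lemma linear_ode_solution:
  fixes f :: "real \<Rightarrow> real"
  assumes f': "\<And>u. (f has_real_derivative l * f u + m) (at u)" and "l \<noteq> 0"
  shows "f u = (f 0 + m / l) * exp (l * u) - m / l"
proof -
  define h where "h u = (f u + m / l) * exp (- l * u)" for u
  have "(h has_real_derivative 0) (at u)" for u
  proof -
    have "(h has_real_derivative (l * f u + m) * exp (- l * u) + (f u + m / l) * (exp (- l * u) * - l)) (at u)"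
      unfolding h_def by (auto intro!: derivative_eq_intros f')
    then show ?thesis using \<open>l \<noteq> 0\<close> by (simp add: field_simps)
  qed
  then have "h u = h 0" by (intro DERIV_isconst_all) auto
  then have "(f u + m / l) * exp (- l * u) * exp (l * u) = (f 0 + m / l) * exp (l * u)"
    unfolding h_def by simp
  then show ?thesis by (simp add: mult.assoc flip: exp_add)
qed

lemma exp_combination_eq_zero:
  fixes a b k :: real
  assumes "k \<noteq> 0" and "\<And>u. a * exp (k * u) + b = 0"
  shows "a = 0" and "b = 0"
proof -
  have "a * exp k = a" using assms(2)[of 1, simplified] assms(2)[of 0, simplified] by linarith
  then show "a = 0" using \<open>k \<noteq> 0\<close> by (simp add: mult_cancel_left2)
  then show "b = 0" using assms(2)[of 0] by simp
qed

lemma coeff_eq_zero_if_not_exp_multiple: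
  fixes h :: "real \<Rightarrow> real"
  assumes "\<not> (\<exists>c. \<forall>u. h u = c * exp (k * u))" and "\<And>u. a * h u + b * exp (k * u) = 0"
  shows "a = 0"
proof (rule ccontr)
  assume "a \<noteq> 0"
  then have "\<forall>u. h u = (- b / a) * exp (k * u)"
    using assms(2) by (simp add: field_simps eq_neg_iff_add_eq_0)
  then show False using assms(1) by blast
qed

section \<open>Partial derivatives on the half space \<open>x > 0\<close>\<close>

lemma smooth1_differentiable: "smooth1 f \<Longrightarrow> f differentiable (at u)"
  unfolding smooth1_def by (metis funpow_0)

lemma smooth3_has_partial_derivatives:
  assumes "smooth3 F" and "x > 0"
  shows "((\<lambda>s. iter_pD ds F s t u) has_real_derivative pDx (iter_pD ds F) x t u) (at x)"
    and "((\<lambda>s. iter_pD ds F x s u) has_real_derivative pDt (iter_pD ds F) x t u) (at t)"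
    and "((\<lambda>s. iter_pD ds F x t s) has_real_derivative pDu (iter_pD ds F) x t u) (at u)"
  using assms unfolding smooth3_def Let_def pDx_def pDt_def pDu_def
  by (auto simp: DERIV_deriv_iff_real_differentiable)

lemma iter_pD_affine_exp:
  "\<exists>a' b' c' d' e'. iter_pD ds (\<lambda>x t u. a * x + b * t + c * exp (d * t) + e) =
     (\<lambda>x t u. a' * x + b' * t + c' * exp (d' * t) + e')"
proof (induction ds)
  case Nil
  show ?case unfolding iter_pD.simps by (intro exI) (rule refl)
next
  case (Cons dir ds)
  then obtain a1 b1 c1 d1 e1 where IH: "iter_pD ds (\<lambda>x t u. a * x + b * t + c * exp (d * t) + e) =
     (\<lambda>x t u. a1 * x + b1 * t + c1 * exp (d1 * t) + e1)" by blast
  show ?case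
  proof (cases dir)
    case DX
    have "pDx (\<lambda>x t u. a1 * x + b1 * t + c1 * exp (d1 * t) + e1) =
        (\<lambda>x t u. 0 * x + 0 * t + 0 * exp (0 * t) + a1)"
      unfolding pDx_def by (intro ext DERIV_imp_deriv) (auto intro!: derivative_eq_intros)
    then show ?thesis unfolding DX iter_pD.simps pD.simps IH by (intro exI)
  next
    case DT
    have "pDt (\<lambda>x t u. a1 * x + b1 * t + c1 * exp (d1 * t) + e1) =
        (\<lambda>x t u. 0 * x + 0 * t + (c1 * d1) * exp (d1 * t) + b1)"
      unfolding pDt_def by (intro ext DERIV_imp_deriv) (auto intro!: derivative_eq_intros)
    then show ?thesis unfolding DT iter_pD.simps pD.simps IH by (intro exI)
  next
    case DU
    have "pDu (\<lambda>x t u. a1 * x + b1 * t + c1 * exp (d1 * t) + e1) =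
        (\<lambda>x t u. 0 * x + 0 * t + 0 * exp (0 * t) + 0)"
      unfolding pDu_def by simp
    then show ?thesis unfolding DU iter_pD.simps pD.simps IH by (intro exI)
  qed
qed

lemma smooth3_affine_exp:
  assumes "\<And>x t u. F x t u = a * x + b * t + c * exp (d * t) + e"
  shows "smooth3 F"
  unfolding smooth3_def Let_def
proof (intro allI conjI impI)
  fix ds
  have "F = (\<lambda>x t u. a * x + b * t + c * exp (d * t) + e)" by (intro ext) (rule assms)
  then obtain a' b' c' d' e' where F': "iter_pD ds F = (\<lambda>x t u. a' * x + b' * t + c' * exp (d' * t) + e')"
    using iter_pD_affine_exp[of ds a b c d e] by blast
  show "continuous_on {p. fst p > 0} (\<lambda>(x, t, u). iter_pD ds F x t u)"
    unfolding F' case_prod_beta by (intro continuous_intros)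
  fix x t u :: real
  show "(\<lambda>s. iter_pD ds F s t u) differentiable (at x)"
    and "(\<lambda>s. iter_pD ds F x s u) differentiable (at t)"
    and "(\<lambda>s. iter_pD ds F x t s) differentiable (at u)"
    unfolding F' by (auto intro!: derivative_eq_intros simp: real_differentiable_def)
qed

lemma half_space_partials:
  fixes G :: "real \<Rightarrow> real \<Rightarrow> real"
  assumes F: "\<forall>x t u. x > 0 \<longrightarrow> F x t u = G x t" and "x > 0"
  shows "pDx F x t u = deriv (\<lambda>s. G s t) x"
    and "pDt F x t u = deriv (G x) t"
    and "pDu F x t u = 0"
    and "pDx (pDx F) x t u = deriv (deriv (\<lambda>s. G s t)) x"
    and "pDu (pDx F) x t u = 0"
    and "pDu (pDu F) x t u = 0"
proof -
  have Fx: "pDx F s t v = deriv (\<lambda>s. G s t) s" if "s > 0" for s v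
    unfolding pDx_def using that F by (intro deriv_eq_on_half_line) auto
  have "F x t = (\<lambda>_. G x t)" using F \<open>x > 0\<close> by auto
  then have Fu: "pDu F x t v = 0" for v
    unfolding pDu_def by simp
  show "pDx F x t u = deriv (\<lambda>s. G s t) x" using Fx \<open>x > 0\<close> .
  show "pDt F x t u = deriv (G x) t"
    unfolding pDt_def using F \<open>x > 0\<close> by simp
  show "pDu F x t u = 0" by (rule Fu)
  show "pDx (pDx F) x t u = deriv (deriv (\<lambda>s. G s t)) x"
    unfolding pDx_def[of "pDx F"] using Fx \<open>x > 0\<close> by (intro deriv_eq_on_half_line) auto
  have "pDx F x t = (\<lambda>_. deriv (\<lambda>s. G s t) x)" using Fx \<open>x > 0\<close> by auto
  then show "pDu (pDx F) x t u = 0" unfolding pDu_def[of "pDx F"] by simp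
  have "pDu F x t = (\<lambda>_. 0)" using Fu by auto
  then show "pDu (pDu F) x t u = 0" unfolding pDu_def[of "pDu F"] by simp
qed

section \<open>The invariance condition\<close>

lemma fisher_cyl_exp_eq_zero_iff:
  "fisher_cyl f (\<lambda>u. k1 * exp (k2 * u)) x t u ux ut uxx = 0 \<longleftrightarrow>
     ut = f u + k1 * exp (k2 * u) * uxx + k2 * k1 * exp (k2 * u) * ux^2 + k1 * exp (k2 * u) * ux / x"
  unfolding fisher_cyl_def deriv_scaled_exp by (auto simp: algebra_simps)

text \<open>The second prolongation on the solution manifold: \<open>u\<^sub>t\<close> is eliminated by means of
  the equation, and the remaining jet coordinates \<open>u\<^sub>x, u\<^sub>x\<^sub>x, u\<^sub>x\<^sub>t\<close> are
  \<open>p, w, r\<close>.\<close>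
definition fisher_invariance_form ::
    "(real \<Rightarrow> real) \<Rightarrow> real \<Rightarrow> real \<Rightarrow> fun3 \<Rightarrow> fun3 \<Rightarrow> fun3 \<Rightarrow>
     real \<Rightarrow> real \<Rightarrow> real \<Rightarrow> real \<Rightarrow> real \<Rightarrow> real \<Rightarrow> real" where
  "fisher_invariance_form f k1 k2 xi tau eta x t u p w r =
     (let g = k1 * exp (k2 * u); ut = f u + g * w + k2 * g * p^2 + g * p / x in
        xi x t u * g * p / x^2
      - eta x t u * (deriv f u + k2 * g * w + k2^2 * g * p^2 + k2 * g * p / x)
      - eta_x xi tau eta x t u p ut * (2 * k2 * g * p + g / x)
      + eta_t xi tau eta x t u p ut
      - eta_xx xi tau eta x t u p ut w r * g)"

lemma pr2_fisher_cyl_exp_on_solutions: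
  assumes "x > 0" and "f differentiable (at u)"
    and "fisher_cyl f (\<lambda>u. k1 * exp (k2 * u)) x t u p ut w = 0"
  shows "pr2 (fisher_cyl f (\<lambda>u. k1 * exp (k2 * u))) xi tau eta x t u p ut w r =
    fisher_invariance_form f k1 k2 xi tau eta x t u p w r"
proof -
  let ?E = "fisher_cyl f (\<lambda>u. k1 * exp (k2 * u))"
  have E: "?E = (\<lambda>x t u ux ut uxx. ut - f u - (k1 * exp (k2 * u) * uxx
      + k1 * k2 * exp (k2 * u) * ux^2 + k1 * exp (k2 * u) * ux / x))"
    unfolding fisher_cyl_def deriv_scaled_exp by simp
  have f': "(f has_real_derivative deriv f u) (at u)"
    using assms(2) by (simp add: DERIV_deriv_iff_real_differentiable)
  have d1: "deriv (\<lambda>s. ?E s t u p ut w) x = k1 * exp (k2 * u) * p / x^2"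
    unfolding E using \<open>x > 0\<close>
    by (intro DERIV_imp_deriv) (auto intro!: derivative_eq_intros simp: power2_eq_square field_simps)
  have d2: "deriv (\<lambda>s. ?E x s u p ut w) t = 0"
    unfolding E by simp
  have d3: "deriv (\<lambda>s. ?E x t s p ut w) u = - (deriv f u + k2 * k1 * exp (k2 * u) * w
      + k2^2 * k1 * exp (k2 * u) * p^2 + k2 * k1 * exp (k2 * u) * p / x)"
    unfolding E using \<open>x > 0\<close>
    by (intro DERIV_imp_deriv) (auto intro!: derivative_eq_intros f' simp: power2_eq_square field_simps)
  have d4: "deriv (\<lambda>s. ?E x t u s ut w) p = - (2 * k2 * k1 * exp (k2 * u) * p + k1 * exp (k2 * u) / x)"
    unfolding E using \<open>x > 0\<close>
    by (intro DERIV_imp_deriv) (auto intro!: derivative_eq_intros simp: power2_eq_square field_simps)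
  have d5: "deriv (\<lambda>s. ?E x t u p s w) ut = 1"
    unfolding E by (intro DERIV_imp_deriv) (auto intro!: derivative_eq_intros)
  have d6: "deriv (\<lambda>s. ?E x t u p ut s) w = - (k1 * exp (k2 * u))"
    unfolding E by (intro DERIV_imp_deriv) (auto intro!: derivative_eq_intros)
  have ut: "ut = f u + k1 * exp (k2 * u) * w + k2 * k1 * exp (k2 * u) * p^2 + k1 * exp (k2 * u) * p / x"
    using assms(3) unfolding fisher_cyl_exp_eq_zero_iff .
  show ?thesis
    unfolding pr2_def d1 d2 d3 d4 d5 d6 unfolding fisher_invariance_form_def Let_def ut
    by (simp add: algebra_simps)
qed

lemma lie_point_symmetry_fisher_cyl_exp_iff:
  assumes "\<And>u. f differentiable (at u)"
  shows "lie_point_symmetry (fisher_cyl f (\<lambda>u. k1 * exp (k2 * u))) xi tau eta \<longleftrightarrow>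
    smooth3 xi \<and> smooth3 tau \<and> smooth3 eta \<and>
    (\<forall>x t u p w r. x > 0 \<longrightarrow> fisher_invariance_form f k1 k2 xi tau eta x t u p w r = 0)"
  unfolding lie_point_symmetry_def
proof (intro conj_cong refl iffI allI impI)
  fix x t u p w r :: real
  assume pr2: "\<forall>x t u ux ut uxx uxt. x > 0 \<longrightarrow> fisher_cyl f (\<lambda>u. k1 * exp (k2 * u)) x t u ux ut uxx = 0 \<longrightarrow>
      pr2 (fisher_cyl f (\<lambda>u. k1 * exp (k2 * u))) xi tau eta x t u ux ut uxx uxt = 0"
    and "x > 0"
  let ?ut = "f u + k1 * exp (k2 * u) * w + k2 * k1 * exp (k2 * u) * p^2 + k1 * exp (k2 * u) * p / x"
  have "fisher_cyl f (\<lambda>u. k1 * exp (k2 * u)) x t u p ?ut w = 0"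
    unfolding fisher_cyl_exp_eq_zero_iff ..
  with pr2 \<open>x > 0\<close> show "fisher_invariance_form f k1 k2 xi tau eta x t u p w r = 0"
    using pr2_fisher_cyl_exp_on_solutions[OF \<open>x > 0\<close> assms] by metis
next
  fix x t u ux ut uxx uxt :: real
  assume "\<forall>x t u p w r. x > 0 \<longrightarrow> fisher_invariance_form f k1 k2 xi tau eta x t u p w r = 0"
    and "x > 0" and "fisher_cyl f (\<lambda>u. k1 * exp (k2 * u)) x t u ux ut uxx = 0"
  then show "pr2 (fisher_cyl f (\<lambda>u. k1 * exp (k2 * u))) xi tau eta x t u ux ut uxx uxt = 0"
    using pr2_fisher_cyl_exp_on_solutions[OF \<open>x > 0\<close> assms] by metis
qed

lemma fisher_invariance_form_affine_in_uxt:
  "fisher_invariance_form f k1 k2 xi tau eta x t u p w r =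
     fisher_invariance_form f k1 k2 xi tau eta x t u p w 0
     + 2 * k1 * exp (k2 * u) * (pDx tau x t u + pDu tau x t u * p) * r"
  unfolding fisher_invariance_form_def eta_xx_def Let_def by (simp add: algebra_simps)

lemma fisher_invariance_form_u_independent:
  fixes Xi H :: "real \<Rightarrow> real \<Rightarrow> real" and T :: "real \<Rightarrow> real"
  assumes xi: "\<forall>x t u. x > 0 \<longrightarrow> xi x t u = Xi x t"
    and tau: "\<forall>x t u. x > 0 \<longrightarrow> tau x t u = T t"
    and eta: "\<forall>x t u. x > 0 \<longrightarrow> eta x t u = H x t"
    and "x > 0"
  shows "fisher_invariance_form f k1 k2 xi tau eta x t u p w r =
    k1 * exp (k2 * u) * (2 * deriv (\<lambda>s. Xi s t) x - k2 * H x t - deriv T t) * (w + k2 * p^2 + p / x)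
    + p * (k1 * exp (k2 * u) * (Xi x t / x^2 - deriv (\<lambda>s. Xi s t) x / x
             + deriv (deriv (\<lambda>s. Xi s t)) x - 2 * k2 * deriv (\<lambda>s. H s t) x) - deriv (Xi x) t)
    + deriv (H x) t - H x t * deriv f u - deriv T t * f u
    - k1 * exp (k2 * u) * (deriv (\<lambda>s. H s t) x / x + deriv (deriv (\<lambda>s. H s t)) x)"
  unfolding fisher_invariance_form_def eta_x_def eta_t_def eta_xx_def Let_def
    half_space_partials[OF xi \<open>x > 0\<close>] half_space_partials[OF tau \<open>x > 0\<close>]
    half_space_partials[OF eta \<open>x > 0\<close>]
  using \<open>x > 0\<close> xi eta by (simp add: field_simps power2_eq_square)

section \<open>The listed symmetries\<close>

text \<open>For \<open>\<xi> = a x\<close>, \<open>\<tau> = T(t)\<close>, \<open>\<eta> = H(t)\<close> the invariance form collapses to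
  \<open>(2a - k\<^sub>2 H - T') g (u\<^sub>x\<^sub>x + k\<^sub>2 u\<^sub>x\<^sup>2 + u\<^sub>x/x) + H' - H f' - T' f\<close>.\<close>

lemma lie_point_symmetry_fisher_cyl_expI:
  assumes f: "\<And>u. f differentiable (at u)"
    and "smooth3 (\<lambda>x t u. T t)" and "smooth3 (\<lambda>x t u. H t)"
    and balance: "\<And>t. k2 * H t = 2 * a - deriv T t"
    and source: "\<And>t u. deriv H t = H t * deriv f u + deriv T t * f u"
  shows "lie_point_symmetry (fisher_cyl f (\<lambda>u. k1 * exp (k2 * u)))
    (\<lambda>x t u. a * x) (\<lambda>x t u. T t) (\<lambda>x t u. H t)"
  unfolding lie_point_symmetry_fisher_cyl_exp_iff[OF f]
proof (intro conjI allI impI)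
  show "smooth3 (\<lambda>x t u. a * x)" by (rule smooth3_affine_exp[of _ a 0 0 0 0]) simp
  fix x t u p w r :: real
  assume "x > 0"
  have "fisher_invariance_form f k1 k2 (\<lambda>x t u. a * x) (\<lambda>x t u. T t) (\<lambda>x t u. H t) x t u p w r =
      k1 * exp (k2 * u) * (2 * a - k2 * H t - deriv T t) * (w + k2 * p^2 + p / x)
      + p * k1 * exp (k2 * u) * (a * x / x^2 - a / x)
      + deriv H t - H t * deriv f u - deriv T t * f u"
    by (subst fisher_invariance_form_u_independent[where Xi = "\<lambda>x t. a * x" and T = T
          and H = "\<lambda>x t. H t"]) (simp_all add: \<open>x > 0\<close> algebra_simps)
  also have "\<dots> = 0"
    using balance[of t] source[of t u] \<open>x > 0\<close> by (simp add: power2_eq_square)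
  finally show "fisher_invariance_form f k1 k2 (\<lambda>x t u. a * x) (\<lambda>x t u. T t) (\<lambda>x t u. H t) x t u p w r = 0" .
qed (use assms in auto)

lemma fisher_cyl_exp_time_translation:
  assumes "\<And>u. f differentiable (at u)"
  shows "lie_point_symmetry (fisher_cyl f (\<lambda>u. k1 * exp (k2 * u))) (\<lambda>x t u. 0) (\<lambda>x t u. 1) (\<lambda>x t u. 0)"
proof -
  have "lie_point_symmetry (fisher_cyl f (\<lambda>u. k1 * exp (k2 * u)))
      (\<lambda>x t u. 0 * x) (\<lambda>x t u. 1) (\<lambda>x t u. 0)"
    by (rule lie_point_symmetry_fisher_cyl_expI[OF assms])
      (auto intro: smooth3_affine_exp[of _ 0 0 0 0 1] smooth3_affine_exp[of _ 0 0 0 0 0])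
  then show ?thesis by simp
qed

lemma fisher_cyl_exp_symmetry_exp_source:
  assumes "\<forall>u. f u = k3 * exp (k4 * u)"
  shows "lie_point_symmetry (fisher_cyl f (\<lambda>u. k1 * exp (k2 * u)))
    (\<lambda>x t u. (k4 - k2) * x) (\<lambda>x t u. 2 * k4 * t) (\<lambda>x t u. -2)"
proof -
  have f': "(f has_real_derivative k3 * k4 * exp (k4 * u)) (at u)" for u
    using assms by (auto intro!: derivative_eq_intros simp: fun_eq_iff[symmetric])
  show ?thesis
  proof (rule lie_point_symmetry_fisher_cyl_expI)
    show "f differentiable (at u)" for u using f' by (auto simp: real_differentiable_def)
    show "smooth3 (\<lambda>x t u. 2 * k4 * t)" by (rule smooth3_affine_exp[of _ 0 "2 * k4" 0 0 0]) simp
    show "smooth3 (\<lambda>x t u. -2)" by (rule smooth3_affine_exp[of _ 0 0 0 0 "-2"]) simp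
  qed (use assms DERIV_imp_deriv[OF f'] in \<open>simp_all add: algebra_simps\<close>)
qed

lemma fisher_cyl_exp_symmetry_exp_plus_const_source:
  assumes "\<forall>u. f u = k3 * exp (k2 * u) + k5"
  shows "lie_point_symmetry (fisher_cyl f (\<lambda>u. k1 * exp (k2 * u)))
    (\<lambda>x t u. 0) (\<lambda>x t u. exp (- k2 * k5 * t)) (\<lambda>x t u. k5 * exp (- k2 * k5 * t))"
proof -
  have f': "(f has_real_derivative k3 * k2 * exp (k2 * u)) (at u)" for u
    using assms by (auto intro!: derivative_eq_intros simp: fun_eq_iff[symmetric])
  have "lie_point_symmetry (fisher_cyl f (\<lambda>u. k1 * exp (k2 * u)))
    (\<lambda>x t u. 0 * x) (\<lambda>x t u. exp (- k2 * k5 * t)) (\<lambda>x t u. k5 * exp (- k2 * k5 * t))"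
  proof (rule lie_point_symmetry_fisher_cyl_expI)
    show "f differentiable (at u)" for u using f' by (auto simp: real_differentiable_def)
    show "smooth3 (\<lambda>x t u. exp (- k2 * k5 * t))"
      by (rule smooth3_affine_exp[of _ 0 0 1 "- k2 * k5" 0]) simp
    show "smooth3 (\<lambda>x t u. k5 * exp (- k2 * k5 * t))"
      by (rule smooth3_affine_exp[of _ 0 0 k5 "- k2 * k5" 0]) simp
    have dT: "deriv (\<lambda>t. exp (- k2 * k5 * t)) t = - k2 * k5 * exp (- k2 * k5 * t)" for t
      using deriv_scaled_exp[of 1 "- k2 * k5" t] by simp
    have dH: "deriv (\<lambda>t. k5 * exp (- k2 * k5 * t)) t = k5 * (- k2 * k5) * exp (- k2 * k5 * t)" for t
      by (rule deriv_scaled_exp)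
    show "k2 * (k5 * exp (- k2 * k5 * t)) = 2 * 0 - deriv (\<lambda>t. exp (- k2 * k5 * t)) t" for t
      unfolding dT by simp
    show "deriv (\<lambda>t. k5 * exp (- k2 * k5 * t)) t =
        k5 * exp (- k2 * k5 * t) * deriv f u + deriv (\<lambda>t. exp (- k2 * k5 * t)) t * f u" for t u
      unfolding dT dH DERIV_imp_deriv[OF f'] using assms by (simp add: algebra_simps)
  qed
  then show ?thesis by simp
qed

lemma fisher_cyl_exp_symmetry_const_source:
  assumes "\<forall>u. f u = k5"
  shows "lie_point_symmetry (fisher_cyl f (\<lambda>u. k1 * exp (k2 * u)))
    (\<lambda>x t u. k2 * x) (\<lambda>x t u. 0) (\<lambda>x t u. 2)"
proof -
  have f: "f = (\<lambda>u. k5)" using assms by auto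
  show ?thesis
    by (rule lie_point_symmetry_fisher_cyl_expI)
      (auto simp: f intro: smooth3_affine_exp[of _ 0 0 0 0 0] smooth3_affine_exp[of _ 0 0 0 0 2])
qed

section \<open>Classification of the source term\<close>

lemma coeff_eq_zero_if_deriv_not_exp_multiple:
  fixes f :: "real \<Rightarrow> real"
  assumes "\<not> (\<exists>a. \<forall>u. deriv f u = a * exp (k * u))" and "\<And>u. A * f u + B = 0"
  shows "A = 0"
proof (rule ccontr)
  assume "A \<noteq> 0"
  then have "f = (\<lambda>_. - B / A)" using assms(2) by (auto simp: field_simps eq_neg_iff_add_eq_0)
  then have "\<forall>u. deriv f u = 0 * exp (k * u)" by simp
  then show False using assms(1) by blast
qed

lemma exponential_of_homogeneous_linear_ode:
  fixes f :: "real \<Rightarrow> real"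
  assumes f': "\<And>u. (f has_real_derivative l * f u) (at u)"
    and not_exp: "\<not> (\<exists>a. \<forall>u. deriv f u = a * exp (k * u))"
  shows "\<exists>k3 k4. k3 \<noteq> 0 \<and> k4 \<noteq> 0 \<and> (\<forall>u. f u = k3 * exp (k4 * u))"
proof -
  have deriv_f: "deriv f u = l * f u" for u using f' by (rule DERIV_imp_deriv)
  have "l \<noteq> 0"
  proof
    assume "l = 0"
    then have "\<forall>u. deriv f u = 0 * exp (k * u)" using deriv_f by simp
    then show False using not_exp by blast
  qed
  have f'_affine: "(f has_real_derivative l * f u + 0) (at u)" for u using f' by simp
  have f_exp: "f u = f 0 * exp (l * u)" for u
    using linear_ode_solution[OF f'_affine \<open>l \<noteq> 0\<close>, of u] by simp
  have "f 0 \<noteq> 0"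
  proof
    assume "f 0 = 0"
    then have "deriv f u = 0 * exp (k * u)" for u using deriv_f[of u] f_exp[of u] by simp
    then show False using not_exp by blast
  qed
  show ?thesis
  proof (intro exI conjI allI)
    show "f 0 \<noteq> 0" and "l \<noteq> 0" by fact+
    show "f u = f 0 * exp (l * u)" for u by (rule f_exp)
  qed
qed

lemma exponential_of_linear_relation:
  fixes f S :: "real \<Rightarrow> real"
  assumes f: "\<And>u. f differentiable (at u)"
    and relation: "\<And>t u. (c - S t) * deriv f u + deriv S t + k * S t * f u = 0"
    and nontrivial: "c - S t0 \<noteq> 0 \<or> S t0 \<noteq> 0"
    and not_exp: "\<not> (\<exists>a. \<forall>u. deriv f u = a * exp (k * u))"
    and "k \<noteq> 0"
  shows "\<exists>k3 k4. k3 \<noteq> 0 \<and> k4 \<noteq> 0 \<and> (\<forall>u. f u = k3 * exp (k4 * u))"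
proof -
  note nonconstant = coeff_eq_zero_if_deriv_not_exp_multiple[OF not_exp]
  define \<alpha> where "\<alpha> = c - S t0"
  have "\<alpha> \<noteq> 0"
  proof
    assume "\<alpha> = 0"
    have "k * S t0 = 0"
      by (rule nonconstant[of _ "deriv S t0"])
        (use relation[of t0] \<open>\<alpha> = 0\<close> in \<open>simp add: \<alpha>_def add.commute\<close>)
    then show False using \<open>\<alpha> = 0\<close> nontrivial \<open>k \<noteq> 0\<close> by (simp add: \<alpha>_def)
  qed
  define l m where "l = - k * S t0 / \<alpha>" and "m = - deriv S t0 / \<alpha>"
  have f': "deriv f u = l * f u + m" for u
  proof -
    have "\<alpha> * deriv f u = - (k * S t0 * f u) - deriv S t0"
      using relation[of t0 u] unfolding \<alpha>_def by linarith
    then show ?thesis using \<open>\<alpha> \<noteq> 0\<close> unfolding l_def m_def by (simp add: field_simps)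
  qed
  have f'_has: "(f has_real_derivative l * f u + m) (at u)" for u
    using f[of u] f'[of u] by (simp add: DERIV_deriv_iff_real_differentiable[symmetric])
  have coeffs: "(c - S t) * l + k * S t = 0" for t
    by (rule nonconstant[of _ "(c - S t) * m + deriv S t"])
      (use relation[of t] in \<open>simp add: f' algebra_simps\<close>)
  have "l \<noteq> k"
  proof
    assume "l = k"
    have "deriv f u = (k * (f 0 + m / k)) * exp (k * u)" for u
      using f'[of u] linear_ode_solution[OF f'_has, of u] \<open>l = k\<close> \<open>k \<noteq> 0\<close>
      by (simp add: algebra_simps)
    then show False using not_exp by blast
  qed
  then have "S = (\<lambda>_. - c * l / (k - l))"
    using coeffs by (intro ext) (simp add: field_simps)
  then have "m = 0" unfolding m_def by simp
  then have "(f has_real_derivative l * f u) (at u)" for u using f'_has[of u] by simp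
  then show ?thesis by (rule exponential_of_homogeneous_linear_ode[OF _ not_exp])
qed

definition exceptional_source :: "(real \<Rightarrow> real) \<Rightarrow> real \<Rightarrow> bool" where
  "exceptional_source f k2 \<longleftrightarrow>
     (\<exists>k3 k4. k3 \<noteq> 0 \<and> k4 \<noteq> 0 \<and> (\<forall>u. f u = k3 * exp (k4 * u))) \<or>
     (\<exists>k3 k5. k3 \<noteq> 0 \<and> k5 \<noteq> 0 \<and> (\<forall>u. f u = k3 * exp (k2 * u) + k5)) \<or>
     (\<exists>k5. k5 \<noteq> 0 \<and> (\<forall>u. f u = k5))"

lemma exceptional_source_if_deriv_exp_multiple:
  assumes f: "\<And>u. f differentiable (at u)" and "\<exists>u. f u \<noteq> 0" and "k2 \<noteq> 0"
    and f': "\<And>u. deriv f u = c * exp (k2 * u)"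
  shows "exceptional_source f k2"
proof -
  define k5 where "k5 = f 0 - c / k2"
  have "((\<lambda>u. f u - c / k2 * exp (k2 * u)) has_real_derivative 0) (at u)" for u
  proof -
    have "(f has_real_derivative c * exp (k2 * u)) (at u)"
      using f[of u] f'[of u] by (simp add: DERIV_deriv_iff_real_differentiable[symmetric])
    then show ?thesis using \<open>k2 \<noteq> 0\<close> by (auto intro!: derivative_eq_intros)
  qed
  then have const: "f u - c / k2 * exp (k2 * u) = f 0 - c / k2 * exp (k2 * 0)" for u
    by (intro DERIV_isconst_all) auto
  have f_eq: "f u = c / k2 * exp (k2 * u) + k5" for u
    using const[of u] unfolding k5_def by simp
  consider "c = 0" | "c \<noteq> 0" and "k5 = 0" | "c \<noteq> 0" and "k5 \<noteq> 0" by blast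
  then show ?thesis
  proof cases
    case 1
    then have "\<forall>u. f u = k5" and "k5 \<noteq> 0" using f_eq \<open>\<exists>u. f u \<noteq> 0\<close> by auto
    then show ?thesis unfolding exceptional_source_def by blast
  next
    case 2
    then have "c / k2 \<noteq> 0 \<and> k2 \<noteq> 0 \<and> (\<forall>u. f u = c / k2 * exp (k2 * u))"
      using f_eq \<open>k2 \<noteq> 0\<close> by simp
    then show ?thesis unfolding exceptional_source_def by (intro disjI1) blast
  next
    case 3
    then have "c / k2 \<noteq> 0 \<and> k5 \<noteq> 0 \<and> (\<forall>u. f u = c / k2 * exp (k2 * u) + k5)"
      using f_eq \<open>k2 \<noteq> 0\<close> by simp
    then show ?thesis unfolding exceptional_source_def by (intro disjI2[OF disjI1]) blast
  qed
qed

section \<open>Determining equations\<close>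

definition time_translation_multiple :: "fun3 \<Rightarrow> fun3 \<Rightarrow> fun3 \<Rightarrow> bool" where
  "time_translation_multiple xi tau eta \<longleftrightarrow>
     (\<exists>c. \<forall>x t u. x > 0 \<longrightarrow> xi x t u = 0 \<and> tau x t u = c \<and> eta x t u = 0)"

text \<open>The determining equations below are the coefficients of \<open>u\<^sub>x\<^sub>t\<close>, \<open>u\<^sub>x\<^sub>x\<close>, \<open>u\<^sub>x\<close>
  and \<open>1\<close> in the invariance form, taken in this order.\<close>

locale fisher_cyl_exp_symmetry =
  fixes f :: "real \<Rightarrow> real" and k1 k2 :: real and xi tau eta :: fun3
  assumes f_differentiable: "\<And>u. f differentiable (at u)"
    and k1_nonzero: "k1 \<noteq> 0" and k2_nonzero: "k2 \<noteq> 0"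
    and symmetry: "lie_point_symmetry (fisher_cyl f (\<lambda>u. k1 * exp (k2 * u))) xi tau eta"
begin

lemma smooth: "smooth3 xi" "smooth3 tau"
  using symmetry unfolding lie_point_symmetry_fisher_cyl_exp_iff[OF f_differentiable] by auto

lemma invariance: "x > 0 \<Longrightarrow> fisher_invariance_form f k1 k2 xi tau eta x t u p w r = 0"
  using symmetry unfolding lie_point_symmetry_fisher_cyl_exp_iff[OF f_differentiable] by auto

lemma tau_x_u_vanish:
  assumes "x > 0"
  shows "pDx tau x t u = 0" and "pDu tau x t u = 0"
proof -
  have "k1 * exp (k2 * u) * (pDx tau x t u + pDu tau x t u * p) = 0" for p
    using fisher_invariance_form_affine_in_uxt[of f k1 k2 xi tau eta x t u p 0 1]
      invariance[OF assms] by simp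
  then have "pDx tau x t u + pDu tau x t u * p = 0" for p using k1_nonzero by simp
  from this[of 0] this[of 1] show "pDx tau x t u = 0" and "pDu tau x t u = 0" by simp_all
qed

definition T :: "real \<Rightarrow> real" where "T t = tau 1 t 0"

lemma tau_eq: "\<forall>x t u. x > 0 \<longrightarrow> tau x t u = T t"
proof (intro allI impI)
  fix x t u :: real
  assume "x > 0"
  have "tau x t u = tau 1 t u"
    using smooth3_has_partial_derivatives(1)[OF smooth(2), where ds = "[]"] tau_x_u_vanish(1) \<open>x > 0\<close>
    by (intro constant_on_half_line[where F = "\<lambda>s. tau s t u"]) auto
  also have "\<dots> = tau 1 t 0"
    using smooth3_has_partial_derivatives(3)[OF smooth(2), where ds = "[]" and x = 1] tau_x_u_vanish(2)
    by (intro DERIV_isconst_all) auto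
  finally show "tau x t u = T t" unfolding T_def .
qed

lemma T_has_derivatives:
  "(T has_real_derivative deriv T t) (at t)"
  "(deriv T has_real_derivative deriv (deriv T) t) (at t)"
proof -
  have T: "T = (\<lambda>s. tau 1 s 0)" and T': "deriv T = (\<lambda>s. pDt tau 1 s 0)"
    unfolding T_def pDt_def by (simp_all add: fun_eq_iff)
  show "(T has_real_derivative deriv T t) (at t)"
    using smooth3_has_partial_derivatives(2)[OF smooth(2), where ds = "[]" and x = 1 and u = 0]
    unfolding T' by (simp add: T)
  show "(deriv T has_real_derivative deriv (deriv T) t) (at t)"
    using smooth3_has_partial_derivatives(2)[OF smooth(2), where ds = "[DT]" and x = 1 and u = 0]
    unfolding T' by (simp add: pDt_def[of "pDt tau"])
qed

lemma xi_u_vanishes_and_eta_eq: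
  assumes "x > 0"
  shows "pDu xi x t u = 0" and "k2 * eta x t u = 2 * pDx xi x t u - deriv T t"
proof -
  note tau_partials = half_space_partials[OF tau_eq assms]
  have "fisher_invariance_form f k1 k2 xi tau eta x t u p 1 0
      - fisher_invariance_form f k1 k2 xi tau eta x t u p 0 0
      = k1 * exp (k2 * u) * (2 * pDx xi x t u - deriv T t - k2 * eta x t u
          + 2 * pDu xi x t u * p)" for p
    unfolding fisher_invariance_form_def eta_x_def eta_t_def eta_xx_def Let_def tau_partials
    by (simp add: algebra_simps)
  then have "2 * pDx xi x t u - deriv T t - k2 * eta x t u + 2 * pDu xi x t u * p = 0" for p
    using invariance[OF assms] k1_nonzero by simp
  from this[of 0] this[of 1]
  show "pDu xi x t u = 0" and "k2 * eta x t u = 2 * pDx xi x t u - deriv T t" by simp_all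
qed

lemma xi_eq: "\<forall>x t u. x > 0 \<longrightarrow> xi x t u = xi x t 0"
  using smooth3_has_partial_derivatives(3)[OF smooth(1), where ds = "[]"] xi_u_vanishes_and_eta_eq(1)
  by (intro allI impI DERIV_isconst_all) auto

lemma eta_eq: "\<forall>x t u. x > 0 \<longrightarrow> eta x t u = (2 * deriv (\<lambda>s. xi s t 0) x - deriv T t) / k2"
  using xi_u_vanishes_and_eta_eq(2) half_space_partials(1)[OF xi_eq] k2_nonzero
  by (auto simp: field_simps)

lemma xi_t_vanishes_and_radial_ode:
  assumes "x > 0"
  shows "deriv (\<lambda>s. xi x s 0) t = 0"
    and "xi x t 0 / x^2 - deriv (\<lambda>s. xi s t 0) x / x - 3 * deriv (deriv (\<lambda>s. xi s t 0)) x = 0"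
proof -
  let ?B = "xi x t 0 / x^2 - deriv (\<lambda>s. xi s t 0) x / x - 3 * deriv (deriv (\<lambda>s. xi s t 0)) x"
  have "(deriv (\<lambda>s. xi s t 0) has_real_derivative deriv (deriv (\<lambda>s. xi s t 0)) x) (at x)"
    using smooth3_has_partial_derivatives(1)[OF smooth(1) assms, where ds = "[DX]" and t = t and u = 0]
    by (simp add: pDx_def)
  then have eta_dx: "deriv (\<lambda>s. (2 * deriv (\<lambda>r. xi r t 0) s - deriv T t) / k2) x =
      2 * deriv (deriv (\<lambda>s. xi s t 0)) x / k2"
    using DERIV_imp_deriv[OF DERIV_cdivide[OF DERIV_diff[OF DERIV_cmult[of _ _ x UNIV 2] DERIV_const]]]
    by simp
  have "k1 * ?B * exp (k2 * u) + - deriv (\<lambda>s. xi x s 0) t = 0" for u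
  proof -
    have "fisher_invariance_form f k1 k2 xi tau eta x t u 1 0 0
        - fisher_invariance_form f k1 k2 xi tau eta x t u 0 0 0
        = k1 * ?B * exp (k2 * u) + - deriv (\<lambda>s. xi x s 0) t"
      unfolding fisher_invariance_form_u_independent[OF xi_eq tau_eq eta_eq assms] eta_dx
      using k2_nonzero by (simp add: field_simps)
    then show ?thesis using invariance[OF assms] by simp
  qed
  from exp_combination_eq_zero[OF k2_nonzero this] k1_nonzero
  show "deriv (\<lambda>s. xi x s 0) t = 0" and "?B = 0" by simp_all
qed

definition X :: "real \<Rightarrow> real" where "X x = xi x 0 0"

lemma xi_eq_X: "\<forall>x t u. x > 0 \<longrightarrow> xi x t u = X x"
proof (intro allI impI)
  fix x t u :: real
  assume "x > 0"
  have "\<forall>s. ((\<lambda>s. xi x s 0) has_real_derivative 0) (at s)"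
    using smooth3_has_partial_derivatives(2)[OF smooth(1) \<open>x > 0\<close>, where ds = "[]" and u = 0]
      xi_t_vanishes_and_radial_ode(1)[OF \<open>x > 0\<close>]
    by (simp add: pDt_def)
  then have "xi x t 0 = xi x 0 0" by (rule DERIV_isconst_all)
  moreover have "xi x t u = xi x t 0" using xi_eq \<open>x > 0\<close> by blast
  ultimately show "xi x t u = X x" unfolding X_def by simp
qed

lemma X_has_derivatives:
  assumes "x > 0"
  shows "(deriv X has_real_derivative deriv (deriv X) x) (at x)"
    and "(deriv (deriv X) has_real_derivative deriv (deriv (deriv X)) x) (at x)"
proof -
  have X: "X = (\<lambda>s. xi s 0 0)" by (simp add: fun_eq_iff X_def)
  have X': "deriv X = (\<lambda>s. pDx xi s 0 0)" by (simp add: fun_eq_iff X pDx_def)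
  have X'': "deriv (deriv X) = (\<lambda>s. pDx (pDx xi) s 0 0)" by (simp add: fun_eq_iff X' pDx_def)
  note D = smooth3_has_partial_derivatives(1)[OF smooth(1) assms, where t = 0 and u = 0]
  show "(deriv X has_real_derivative deriv (deriv X) x) (at x)"
    using D[where ds = "[DX]"] by (simp add: X'' flip: X')
  show "(deriv (deriv X) has_real_derivative deriv (deriv (deriv X)) x) (at x)"
    using D[where ds = "[DX, DX]"] by (simp add: X'' pDx_def[of "pDx (pDx xi)"])
qed

lemma radial_ode: "x > 0 \<Longrightarrow> X x / x^2 - deriv X x / x - 3 * deriv (deriv X) x = 0"
  using xi_t_vanishes_and_radial_ode(2)[of x 0] by (simp add: X_def[abs_def])

lemma eta_eq_X: "\<forall>x t u. x > 0 \<longrightarrow> eta x t u = (2 * deriv X x - deriv T t) / k2"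
proof (intro allI impI)
  fix x t u :: real
  assume "x > 0"
  have "deriv (\<lambda>s. xi s t 0) x = deriv X x"
    using xi_eq_X by (intro deriv_eq_on_half_line[OF \<open>x > 0\<close>]) auto
  then show "eta x t u = (2 * deriv X x - deriv T t) / k2" using eta_eq \<open>x > 0\<close> by simp
qed

lemma determining_equation:
  assumes "x > 0"
  shows "(2 * deriv X x - deriv T t) * deriv f u
    + 2 * k1 * exp (k2 * u) * (deriv (deriv X) x / x + deriv (deriv (deriv X)) x)
    + deriv (deriv T) t + k2 * deriv T t * f u = 0"
proof -
  have eta_dx: "deriv (\<lambda>s. (2 * deriv X s - deriv T t) / k2) y = 2 * deriv (deriv X) y / k2"
    if "y > 0" for y
    using DERIV_imp_deriv[OF DERIV_cdivide[OF DERIV_diff[OF DERIV_cmult[OF X_has_derivatives(1)[OF that]]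
        DERIV_const]]] by simp
  have "deriv (deriv (\<lambda>s. (2 * deriv X s - deriv T t) / k2)) x = deriv (\<lambda>s. 2 * deriv (deriv X) s / k2) x"
    using eta_dx by (intro deriv_eq_on_half_line[OF assms]) auto
  also have "\<dots> = 2 * deriv (deriv (deriv X)) x / k2"
    using DERIV_imp_deriv[OF DERIV_cdivide[OF DERIV_cmult[OF X_has_derivatives(2)[OF assms]]]] by simp
  finally have eta_dxx: "deriv (deriv (\<lambda>s. (2 * deriv X s - deriv T t) / k2)) x =
      2 * deriv (deriv (deriv X)) x / k2" .
  have eta_dt: "deriv (\<lambda>s. (2 * deriv X x - deriv T s) / k2) t = - deriv (deriv T) t / k2"
    using DERIV_imp_deriv[OF DERIV_cdivide[OF DERIV_diff[OF DERIV_const T_has_derivatives(2)]]] by simp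
  have "fisher_invariance_form f k1 k2 xi tau eta x t u 0 0 0 =
    - ((2 * deriv X x - deriv T t) * deriv f u
       + 2 * k1 * exp (k2 * u) * (deriv (deriv X) x / x + deriv (deriv (deriv X)) x)
       + deriv (deriv T) t + k2 * deriv T t * f u) / k2"
    unfolding fisher_invariance_form_u_independent[OF xi_eq_X tau_eq eta_eq_X assms]
      eta_dx[OF assms] eta_dxx eta_dt
    using k2_nonzero by (simp add: field_simps)
  then show ?thesis using invariance[OF assms] k2_nonzero by simp
qed

lemma radial_coefficient_linear:
  assumes not_exp: "\<not> (\<exists>c. \<forall>u. deriv f u = c * exp (k2 * u))"
  obtains a where "\<And>x. x > 0 \<Longrightarrow> X x = a * x"
    and "\<And>t u. (2 * a - deriv T t) * deriv f u + deriv (deriv T) t + k2 * deriv T t * f u = 0"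
proof -
  define a where "a = deriv X 1"
  define K where "K x = deriv (deriv X) x / x + deriv (deriv (deriv X)) x" for x
  have X': "deriv X x = a" if "x > 0" for x
  proof -
    have "2 * (deriv X x - deriv X 1) * deriv f u + 2 * k1 * (K x - K 1) * exp (k2 * u) = 0" for u
      using determining_equation[OF that, of 0 u] determining_equation[of 1 0 u]
      unfolding K_def by (simp add: algebra_simps)
    then have "2 * (deriv X x - deriv X 1) = 0"
      by (rule coeff_eq_zero_if_not_exp_multiple[OF not_exp])
    then show ?thesis unfolding a_def by simp
  qed
  have X'': "deriv (deriv X) x = 0" if "x > 0" for x
    using deriv_eq_on_half_line[OF that, of "deriv X" "\<lambda>_. a"] X' by simp
  have X''': "deriv (deriv (deriv X)) x = 0" if "x > 0" for x
    using deriv_eq_on_half_line[OF that, of "deriv (deriv X)" "\<lambda>_. 0"] X'' by simp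
  show ?thesis
  proof
    show "X x = a * x" if "x > 0" for x
      using radial_ode[OF that] X'[OF that] X''[OF that] that
      by (simp add: field_simps power2_eq_square)
    show "(2 * a - deriv T t) * deriv f u + deriv (deriv T) t + k2 * deriv T t * f u = 0" for t u
      using determining_equation[of 1 t u] X'[of 1] X''[of 1] X'''[of 1] by simp
  qed
qed

lemma exponential_source:
  assumes nontrivial: "\<not> time_translation_multiple xi tau eta"
    and not_exp: "\<not> (\<exists>c. \<forall>u. deriv f u = c * exp (k2 * u))"
  shows "\<exists>k3 k4. k3 \<noteq> 0 \<and> k4 \<noteq> 0 \<and> (\<forall>u. f u = k3 * exp (k4 * u))"
proof -
  obtain a where X: "\<And>x. x > 0 \<Longrightarrow> X x = a * x"
    and relation: "\<And>t u. (2 * a - deriv T t) * deriv f u + deriv (deriv T) t + k2 * deriv T t * f u = 0"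
    using radial_coefficient_linear[OF not_exp] by blast
  have "\<exists>t0. 2 * a - deriv T t0 \<noteq> 0 \<or> deriv T t0 \<noteq> 0"
  proof (rule ccontr)
    assume "\<not> ?thesis"
    then have "a = 0" and T': "\<And>t. deriv T t = 0" by auto
    have "\<forall>t. (T has_real_derivative 0) (at t)" using T_has_derivatives(1) T' by metis
    then obtain c where "\<And>t. T t = c" using DERIV_isconst_all by blast
    moreover have "deriv X x = 0" if "x > 0" for x
      using deriv_eq_on_half_line[OF that, of X "\<lambda>s. a * s"] X \<open>a = 0\<close> by simp
    ultimately have "time_translation_multiple xi tau eta"
      unfolding time_translation_multiple_def using xi_eq_X tau_eq eta_eq_X X \<open>a = 0\<close> T'
      by (intro exI[of _ c]) simp
    then show False using nontrivial by simp
  qed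
  then obtain t0 where "2 * a - deriv T t0 \<noteq> 0 \<or> deriv T t0 \<noteq> 0" by blast
  then show ?thesis
    by (rule exponential_of_linear_relation[OF f_differentiable relation _ not_exp k2_nonzero])
qed

end

lemma exceptional_source_if_nontrivial_symmetry:
  assumes f: "\<And>u. f differentiable (at u)" and "\<exists>u. f u \<noteq> 0" and "k1 \<noteq> 0" and "k2 \<noteq> 0"
    and symmetry: "lie_point_symmetry (fisher_cyl f (\<lambda>u. k1 * exp (k2 * u))) xi tau eta"
    and nontrivial: "\<not> time_translation_multiple xi tau eta"
  shows "exceptional_source f k2"
proof (cases "\<exists>c. \<forall>u. deriv f u = c * exp (k2 * u)")
  case True
  then obtain c where "\<And>u. deriv f u = c * exp (k2 * u)" by blast
  then show ?thesis by (rule exceptional_source_if_deriv_exp_multiple[OF f assms(2,4)])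
next
  case False
  interpret fisher_cyl_exp_symmetry f k1 k2 xi tau eta
    using f assms(3,4) symmetry by unfold_locales
  show ?thesis
    unfolding exceptional_source_def using exponential_source[OF nontrivial False] by (rule disjI1)
qed

lemma not_time_translation_multipleI:
  "eta 1 0 0 \<noteq> 0 \<Longrightarrow> \<not> time_translation_multiple xi tau eta"
  unfolding time_translation_multiple_def by force

lemma nontrivial_symmetry_if_exceptional_source:
  assumes "exceptional_source f k2"
  shows "\<exists>xi tau eta. lie_point_symmetry (fisher_cyl f (\<lambda>u. k1 * exp (k2 * u))) xi tau eta \<and>
      \<not> time_translation_multiple xi tau eta"
  using assms unfolding exceptional_source_def
proof (elim disjE exE conjE)
  fix k3 k4 assume "\<forall>u. f u = k3 * exp (k4 * u)"
  then have "lie_point_symmetry (fisher_cyl f (\<lambda>u. k1 * exp (k2 * u)))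
      (\<lambda>x t u. (k4 - k2) * x) (\<lambda>x t u. 2 * k4 * t) (\<lambda>x t u. - 2)"
    by (rule fisher_cyl_exp_symmetry_exp_source)
  moreover have "\<not> time_translation_multiple
      (\<lambda>x t u. (k4 - k2) * x) (\<lambda>x t u. 2 * k4 * t) (\<lambda>x t u. - 2)"
    by (rule not_time_translation_multipleI) simp
  ultimately show ?thesis by blast
next
  fix k3 k5 assume "k5 \<noteq> 0" and f: "\<forall>u. f u = k3 * exp (k2 * u) + k5"
  from f have "lie_point_symmetry (fisher_cyl f (\<lambda>u. k1 * exp (k2 * u)))
      (\<lambda>x t u. 0) (\<lambda>x t u. exp (- k2 * k5 * t)) (\<lambda>x t u. k5 * exp (- k2 * k5 * t))"
    by (rule fisher_cyl_exp_symmetry_exp_plus_const_source)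
  moreover have "\<not> time_translation_multiple
      (\<lambda>x t u. 0) (\<lambda>x t u. exp (- k2 * k5 * t)) (\<lambda>x t u. k5 * exp (- k2 * k5 * t))"
    by (rule not_time_translation_multipleI) (simp add: \<open>k5 \<noteq> 0\<close>)
  ultimately show ?thesis by blast
next
  fix k5 assume "\<forall>u. f u = k5"
  then have "lie_point_symmetry (fisher_cyl f (\<lambda>u. k1 * exp (k2 * u)))
      (\<lambda>x t u. k2 * x) (\<lambda>x t u. 0) (\<lambda>x t u. 2)"
    by (rule fisher_cyl_exp_symmetry_const_source)
  moreover have "\<not> time_translation_multiple (\<lambda>x t u. k2 * x) (\<lambda>x t u. 0) (\<lambda>x t u. 2)"
    by (rule not_time_translation_multipleI) simp
  ultimately show ?thesis by blast
qed

lemma nontrivial_symmetry_iff_exceptional_source: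
  assumes "\<And>u. f differentiable (at u)" and "\<exists>u. f u \<noteq> 0" and "k1 \<noteq> 0" and "k2 \<noteq> 0"
  shows "(\<exists>xi tau eta. lie_point_symmetry (fisher_cyl f (\<lambda>u. k1 * exp (k2 * u))) xi tau eta \<and>
      \<not> time_translation_multiple xi tau eta) \<longleftrightarrow> exceptional_source f k2"
  using exceptional_source_if_nontrivial_symmetry[OF assms]
    nontrivial_symmetry_if_exceptional_source[of f k2 k1] by blast

theorem theorem1:
  fixes f :: "real \<Rightarrow> real" and k1 k2 :: real
  assumes "smooth1 f" and "\<exists>u. f u \<noteq> 0" and "k1 \<noteq> 0" and "k2 \<noteq> 0"
  shows
   "((\<exists>xi tau eta. lie_point_symmetry (fisher_cyl f (\<lambda>u. k1 * exp (k2 * u))) xi tau eta \<and>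
        \<not> (\<exists>c. \<forall>x t u. x > 0 \<longrightarrow> xi x t u = 0 \<and> tau x t u = c \<and> eta x t u = 0))
     \<longleftrightarrow>
     ((\<exists>k3 k4. k3 \<noteq> 0 \<and> k4 \<noteq> 0 \<and> (\<forall>u. f u = k3 * exp (k4 * u))) \<or>
      (\<exists>k3 k5. k3 \<noteq> 0 \<and> k5 \<noteq> 0 \<and> (\<forall>u. f u = k3 * exp (k2 * u) + k5)) \<or>
      (\<exists>k5. k5 \<noteq> 0 \<and> (\<forall>u. f u = k5))))
    \<and>
    (\<forall>k3 k4. k3 \<noteq> 0 \<longrightarrow> k4 \<noteq> 0 \<longrightarrow> (\<forall>u. f u = k3 * exp (k4 * u)) \<longrightarrow>
       lie_point_symmetry (fisher_cyl f (\<lambda>u. k1 * exp (k2 * u)))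
          (\<lambda>x t u. 0) (\<lambda>x t u. 1) (\<lambda>x t u. 0) \<and>
       lie_point_symmetry (fisher_cyl f (\<lambda>u. k1 * exp (k2 * u)))
          (\<lambda>x t u. (k4 - k2) * x) (\<lambda>x t u. 2 * k4 * t) (\<lambda>x t u. -2))
    \<and>
    (\<forall>k3 k5. k3 \<noteq> 0 \<longrightarrow> k5 \<noteq> 0 \<longrightarrow> (\<forall>u. f u = k3 * exp (k2 * u) + k5) \<longrightarrow>
       lie_point_symmetry (fisher_cyl f (\<lambda>u. k1 * exp (k2 * u)))
          (\<lambda>x t u. 0) (\<lambda>x t u. 1) (\<lambda>x t u. 0) \<and>
       lie_point_symmetry (fisher_cyl f (\<lambda>u. k1 * exp (k2 * u)))
          (\<lambda>x t u. 0) (\<lambda>x t u. exp (- k2 * k5 * t)) (\<lambda>x t u. k5 * exp (- k2 * k5 * t)))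
    \<and>
    (\<forall>k5. k5 \<noteq> 0 \<longrightarrow> (\<forall>u. f u = k5) \<longrightarrow>
       lie_point_symmetry (fisher_cyl f (\<lambda>u. k1 * exp (k2 * u)))
          (\<lambda>x t u. 0) (\<lambda>x t u. 1) (\<lambda>x t u. 0) \<and>
       lie_point_symmetry (fisher_cyl f (\<lambda>u. k1 * exp (k2 * u)))
          (\<lambda>x t u. 0) (\<lambda>x t u. exp (- k2 * k5 * t)) (\<lambda>x t u. k5 * exp (- k2 * k5 * t)) \<and>
       lie_point_symmetry (fisher_cyl f (\<lambda>u. k1 * exp (k2 * u)))
          (\<lambda>x t u. k2 * x) (\<lambda>x t u. 0) (\<lambda>x t u. 2))"
proof -
  have f: "\<And>u. f differentiable (at u)" using assms(1) by (rule smooth1_differentiable)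
  have constant_source: "lie_point_symmetry (fisher_cyl f (\<lambda>u. k1 * exp (k2 * u)))
      (\<lambda>x t u. 0) (\<lambda>x t u. exp (- k2 * k5 * t)) (\<lambda>x t u. k5 * exp (- k2 * k5 * t))"
    if "\<forall>u. f u = k5" for k5
    using fisher_cyl_exp_symmetry_exp_plus_const_source[where ?k3.0 = 0] that by simp
  show ?thesis
    by (intro conjI allI impI fisher_cyl_exp_time_translation[OF f]
        nontrivial_symmetry_iff_exceptional_source[OF f assms(2-4),
          unfolded time_translation_multiple_def exceptional_source_def])
      (blast intro: fisher_cyl_exp_symmetry_exp_source fisher_cyl_exp_symmetry_exp_plus_const_source
        constant_source fisher_cyl_exp_symmetry_const_source)+
qed

end
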